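(* Let $K$ be a field of characteristic zero. For $0\le i\le n-1$ let $E_i$ be the injective hull of $K$ over $K[X_1,\ldots,X_i]$ ($E_0=K$), and let $E_{n-1}[X_n]=\bigoplus_{j\ge0}E_{n-1}X_n^j$ (which is isomorphic to $H^{n-1}_{(X_1,\ldots,X_{n-1})}(K[X_1,\ldots,X_n])$). Then for $c=1,\ldots,n$, \[H_i(\partial_c,\partial_{c+1},\ldots,\partial_n;E_{n-1}[X_n])=\begin{cases}0& i\ne1,\\ E_{c-1}& i=1.\end{cases}\]
   Context: $E_i=\bigoplus_{r_1,\ldots,r_i\ge0}K\,\frac{1}{X_1\cdots X_iX_1^{r_1}\cdots X_i^{r_i}}$, where $X_j$ lowers $r_j$ by one (giving $0$ if $r_j=0$) and $\partial_j$ sends the basis element with exponent $r_j$ to $(-r_j-1)$ times the one with $r_j$ replaced by $r_j+1$. On $E_{n-1}[X_n]$, $X_j,\partial_j$ ($j<n$) act on the $E_{n-1}$ factor and $X_n,\partial_n$ act on the polynomial variable $X_n$ by multiplication and differentiation. $H_i(\partial_c,\ldots,\partial_n;N)$ is the $i$-th Koszul homology with respect to the commuting $K$-linear maps $\partial_c,\ldots,\partial_n$. *)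

theory Defs
  imports Main
begin

text \<open>Multi-indices are functions nat => nat; coordinate k (1 <= k <= m) is the exponent
 of variable k.  A basis vector of E_m with exponent vector r stands for
 1/(X_1...X_m X_1^r_1...X_m^r_m).\<close>

definition valid_idx :: "nat \<Rightarrow> (nat \<Rightarrow> nat) \<Rightarrow> bool" where
  "valid_idx m a \<longleftrightarrow> (\<forall>k. (k = 0 \<or> m < k) \<longrightarrow> a k = 0)"

text \<open>Emod i models E_i; Emod n models E_(n-1)[X_n], where coordinate n is
 the exponent of the polynomial variable X_n.\<close>
definition Emod :: "nat \<Rightarrow> ((nat \<Rightarrow> nat) \<Rightarrow> 'a::zero) set" where
  "Emod m = {f. finite {a. f a \<noteq> 0} \<and> (\<forall>a. f a \<noteq> 0 \<longrightarrow> valid_idx m a)}"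

text \<open>X_k on the inverse-monomial part: lowers r_k by one (0 if r_k = 0).\<close>
definition Xloc :: "nat \<Rightarrow> ((nat \<Rightarrow> nat) \<Rightarrow> 'a) \<Rightarrow> (nat \<Rightarrow> nat) \<Rightarrow> 'a" where
  "Xloc k f = (\<lambda>a. f (a(k := Suc (a k))))"

text \<open>d_k on the inverse-monomial part: basis(r) maps to (-r_k-1) basis(r + e_k).\<close>
definition Dloc :: "nat \<Rightarrow> ((nat \<Rightarrow> nat) \<Rightarrow> 'a::comm_ring_1) \<Rightarrow> (nat \<Rightarrow> nat) \<Rightarrow> 'a" where
  "Dloc k f = (\<lambda>a. if a k = 0 then 0 else - of_nat (a k) * f (a(k := a k - 1)))"

definition Xpol :: "nat \<Rightarrow> ((nat \<Rightarrow> nat) \<Rightarrow> 'a::zero) \<Rightarrow> (nat \<Rightarrow> nat) \<Rightarrow> 'a" where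
  "Xpol k f = (\<lambda>a. if a k = 0 then 0 else f (a(k := a k - 1)))"

definition Dpol :: "nat \<Rightarrow> ((nat \<Rightarrow> nat) \<Rightarrow> 'a::comm_semiring_1) \<Rightarrow> (nat \<Rightarrow> nat) \<Rightarrow> 'a" where
  "Dpol k f = (\<lambda>a. of_nat (Suc (a k)) * f (a(k := Suc (a k))))"

definition DN :: "nat \<Rightarrow> nat \<Rightarrow> ((nat \<Rightarrow> nat) \<Rightarrow> 'a::comm_ring_1) \<Rightarrow> (nat \<Rightarrow> nat) \<Rightarrow> 'a" where
  "DN n k = (if k < n then Dloc k else Dpol k)"

definition KC :: "nat \<Rightarrow> nat \<Rightarrow> nat \<Rightarrow> (nat set \<Rightarrow> (nat \<Rightarrow> nat) \<Rightarrow> 'a::zero) set" where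
  "KC n c i = {z. (\<forall>S. z S \<in> Emod n) \<and> (\<forall>S. z S \<noteq> (\<lambda>a. 0) \<longrightarrow> S \<subseteq> {c..n} \<and> card S = i)}"

text \<open>Koszul differential: d(e_S m) = sum over s in S of (-1)^#{t in S. t < s} e_(S-{s}) d_s m.\<close>
definition kd :: "nat \<Rightarrow> nat \<Rightarrow> (nat set \<Rightarrow> (nat \<Rightarrow> nat) \<Rightarrow> 'a::comm_ring_1)
                   \<Rightarrow> nat set \<Rightarrow> (nat \<Rightarrow> nat) \<Rightarrow> 'a" where
  "kd n c z = (\<lambda>T a. if T \<subseteq> {c..n} then
      (\<Sum>s\<in>{c..n} - T. (-1) ^ card {t\<in>T. t < s} * DN n s (z (insert s T)) a) else 0)"

definition Kcycles :: "nat \<Rightarrow> nat \<Rightarrow> nat \<Rightarrow> (nat set \<Rightarrow> (nat \<Rightarrow> nat) \<Rightarrow> 'a::comm_ring_1) set" where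
  "Kcycles n c i = {z \<in> KC n c i. kd n c z = (\<lambda>T a. 0)}"

definition Kbound :: "nat \<Rightarrow> nat \<Rightarrow> nat \<Rightarrow> (nat set \<Rightarrow> (nat \<Rightarrow> nat) \<Rightarrow> 'a::comm_ring_1) set" where
  "Kbound n c i = kd n c ` KC n c (Suc i)"

definition Kacyclic_at :: "nat \<Rightarrow> nat \<Rightarrow> nat \<Rightarrow> 'a::comm_ring_1 itself \<Rightarrow> bool" where
  "Kacyclic_at n c i (_::'a itself) \<longleftrightarrow> (Kcycles n c i :: (nat set \<Rightarrow> (nat \<Rightarrow> nat) \<Rightarrow> 'a) set) \<subseteq> Kbound n c i"

definition H1_iso :: "nat \<Rightarrow> nat \<Rightarrow> (((nat \<Rightarrow> nat) \<Rightarrow> 'a::comm_ring_1) \<Rightarrow> nat set \<Rightarrow> (nat \<Rightarrow> nat) \<Rightarrow> 'a) \<Rightarrow> bool" where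
  "H1_iso n c \<phi> \<longleftrightarrow>
     (\<forall>e\<in>Emod (c - 1). \<phi> e \<in> Kcycles n c 1)
   \<and> (\<forall>x\<in>Emod (c - 1). \<forall>y\<in>Emod (c - 1).
        \<phi> (\<lambda>a. x a + y a) = (\<lambda>S a. \<phi> x S a + \<phi> y S a))
   \<and> (\<forall>s. \<forall>x\<in>Emod (c - 1). \<phi> (\<lambda>a. s * x a) = (\<lambda>S a. s * \<phi> x S a))
   \<and> (\<forall>z\<in>Kcycles n c 1. \<exists>!e. e \<in> Emod (c - 1) \<and> (\<lambda>S a. z S a - \<phi> e S a) \<in> Kbound n c 1)
   \<and> (\<forall>j. 1 \<le> j \<and> j < c \<longrightarrow> (\<forall>x\<in>Emod (c - 1).
        (\<lambda>S a. \<phi> (Xloc j x) S a - Xloc j (\<phi> x S) a) \<in> Kbound n c 1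
      \<and> (\<lambda>S a. \<phi> (Dloc j x) S a - Dloc j (\<phi> x S) a) \<in> Kbound n c 1))"

end

theory Submission
  imports Defs "HOL-Library.Function_Algebras"
begin

text \<open>The Koszul complex of d_c, ..., d_n is the mapping cone of d_c acting on the Koszul
  complex of d_(c+1), ..., d_n, so we induct downwards on c.  For c = n, d_n = d/dX_n is surjective
  on E_(n-1)[X_n] with kernel E_(n-1) (this needs characteristic zero), so the homology is E_(n-1),
  concentrated in degree 1.  In the inductive step the smaller complex has homology E_c in degree 1,
  on which d_c is injective with cokernel E_(c-1), the part with r_c = 0; the long exact sequence
  of the cone then leaves exactly E_(c-1) in degree 1.  An element e of E_(c-1) is represented by
  the 1-cycle e \<otimes> e_{n}.\<close>

lemma Emod_add: "(f :: _ \<Rightarrow> 'a::monoid_add) \<in> Emod m \<Longrightarrow> g \<in> Emod m \<Longrightarrow> f + g \<in> Emod m"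
proof -
  assume f: "f \<in> Emod m" and g: "g \<in> Emod m"
  have "{a. (f + g) a \<noteq> 0} \<subseteq> {a. f a \<noteq> 0} \<union> {a. g a \<noteq> 0}" by auto
  then show ?thesis using f g unfolding Emod_def by (auto intro: finite_subset)
qed

lemma Emod_uminus: "(f :: _ \<Rightarrow> 'a::ab_group_add) \<in> Emod m \<Longrightarrow> - f \<in> Emod m"
  unfolding Emod_def by auto

lemma Emod_diff: "(f :: _ \<Rightarrow> 'a::ab_group_add) \<in> Emod m \<Longrightarrow> g \<in> Emod m \<Longrightarrow> f - g \<in> Emod m"
  using Emod_add[of f m "- g"] Emod_uminus[of g m] by simp

lemma Emod_mono: "f \<in> Emod m \<Longrightarrow> m \<le> m' \<Longrightarrow> f \<in> Emod m'"
  unfolding Emod_def valid_idx_def by auto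

lemma Emod_shift_up:
  assumes f: "f \<in> Emod m" and k: "1 \<le> k" "k \<le> m"
    and g: "\<And>a. g a \<noteq> 0 \<Longrightarrow> a k \<noteq> 0 \<and> f (a(k := a k - 1)) \<noteq> 0"
  shows "g \<in> Emod m"
proof -
  have "{a. g a \<noteq> 0} \<subseteq> (\<lambda>b. b(k := Suc (b k))) ` {a. f a \<noteq> 0}"
  proof
    fix a assume "a \<in> {a. g a \<noteq> 0}"
    then show "a \<in> (\<lambda>b. b(k := Suc (b k))) ` {a. f a \<noteq> 0}"
      using g by (intro image_eqI[of _ _ "a(k := a k - 1)"]) auto
  qed
  moreover have "valid_idx m a" if "g a \<noteq> 0" for a
  proof -
    have "valid_idx m (a(k := a k - 1))" using g[OF that] f by (auto simp: Emod_def)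
    then show ?thesis using k unfolding valid_idx_def by (metis fun_upd_other not_one_le_zero not_le)
  qed
  ultimately show ?thesis using f by (auto simp: Emod_def intro: finite_subset)
qed

lemma Emod_shift_down:
  assumes f: "f \<in> Emod m" and g: "\<And>a. g a \<noteq> 0 \<Longrightarrow> f (a(k := Suc (a k))) \<noteq> 0"
  shows "g \<in> Emod m"
proof -
  have "{a. g a \<noteq> 0} \<subseteq> (\<lambda>b. b(k := b k - 1)) ` {a. f a \<noteq> 0}"
  proof
    fix a assume "a \<in> {a. g a \<noteq> 0}"
    then show "a \<in> (\<lambda>b. b(k := b k - 1)) ` {a. f a \<noteq> 0}"
      using g by (intro image_eqI[of _ _ "a(k := Suc (a k))"]) auto
  qed
  moreover have "valid_idx m a" if "g a \<noteq> 0" for a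
  proof -
    have "valid_idx m (a(k := Suc (a k)))" using g[OF that] f by (auto simp: Emod_def)
    then show ?thesis unfolding valid_idx_def by (metis fun_upd_apply nat.distinct(1))
  qed
  ultimately show ?thesis using f by (auto simp: Emod_def intro: finite_subset)
qed

lemma Emod_Dloc: "f \<in> Emod m \<Longrightarrow> 1 \<le> k \<Longrightarrow> k \<le> m \<Longrightarrow> Dloc k (f :: _ \<Rightarrow> 'a::comm_ring_1) \<in> Emod m"
  by (erule Emod_shift_up) (auto simp: Dloc_def split: if_splits)

definition Iloc :: "nat \<Rightarrow> ((nat \<Rightarrow> nat) \<Rightarrow> 'a::field) \<Rightarrow> (nat \<Rightarrow> nat) \<Rightarrow> 'a" where
  "Iloc k f = (\<lambda>a. - f (a(k := Suc (a k))) / of_nat (Suc (a k)))"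

definition Ipol :: "nat \<Rightarrow> ((nat \<Rightarrow> nat) \<Rightarrow> 'a::field) \<Rightarrow> (nat \<Rightarrow> nat) \<Rightarrow> 'a" where
  "Ipol k f = (\<lambda>a. if a k = 0 then 0 else f (a(k := a k - 1)) / of_nat (a k))"

definition Pzero :: "nat \<Rightarrow> ((nat \<Rightarrow> nat) \<Rightarrow> 'a::zero) \<Rightarrow> (nat \<Rightarrow> nat) \<Rightarrow> 'a" where
  "Pzero k f = (\<lambda>a. if a k = 0 then f a else 0)"

lemma Emod_Iloc: "f \<in> Emod m \<Longrightarrow> Iloc k (f :: _ \<Rightarrow> 'a::field_char_0) \<in> Emod m"
  by (erule Emod_shift_down) (auto simp: Iloc_def)

lemma Emod_Ipol: "f \<in> Emod m \<Longrightarrow> 1 \<le> k \<Longrightarrow> k \<le> m \<Longrightarrow> Ipol k (f :: _ \<Rightarrow> 'a::field_char_0) \<in> Emod m"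
  by (erule Emod_shift_up) (auto simp: Ipol_def split: if_splits)

lemma valid_idx_pred_iff:
  assumes "1 \<le> k"
  shows "valid_idx (k - 1) a \<longleftrightarrow> valid_idx k a \<and> a k = 0"
proof -
  have "(j = 0 \<or> k - 1 < j) \<longleftrightarrow> (j = 0 \<or> k < j) \<or> j = k" for j
    using assms by arith
  then show ?thesis unfolding valid_idx_def by metis
qed

lemma Emod_pred_iff:
  assumes "1 \<le> k"
  shows "f \<in> Emod (k - 1) \<longleftrightarrow> f \<in> Emod k \<and> (\<forall>a. f a \<noteq> 0 \<longrightarrow> a k = 0)"
  unfolding Emod_def using valid_idx_pred_iff[OF assms] by auto

lemma Emod_Pzero:
  assumes "f \<in> Emod k" "1 \<le> k"
  shows "Pzero k f \<in> Emod (k - 1)"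
  unfolding Emod_pred_iff[OF assms(2)]
proof
  have "{a. Pzero k f a \<noteq> 0} \<subseteq> {a. f a \<noteq> 0}" by (auto simp: Pzero_def)
  then show "Pzero k f \<in> Emod k" using assms(1) by (auto simp: Emod_def Pzero_def intro: finite_subset)
qed (simp add: Pzero_def)

lemma Dpol_Ipol: "Dpol k (Ipol k (f :: _ \<Rightarrow> 'a::field_char_0)) = f"
  by (rule ext) (simp add: Dpol_def Ipol_def del: of_nat_Suc)

lemma Iloc_Dloc: "Iloc k (Dloc k (f :: _ \<Rightarrow> 'a::field_char_0)) = f"
  by (rule ext) (simp add: Iloc_def Dloc_def del: of_nat_Suc)

lemma Pzero_add_Dloc_Iloc: "Pzero k f + Dloc k (Iloc k (f :: _ \<Rightarrow> 'a::field_char_0)) = f"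
  by (rule ext) (simp add: Iloc_def Dloc_def Pzero_def del: of_nat_Suc)

lemma Dloc_eq_0_iff: "Dloc k (f :: _ \<Rightarrow> 'a::field_char_0) = 0 \<longleftrightarrow> f = 0"
proof
  assume "Dloc k f = 0"
  then show "f = 0" using Iloc_Dloc[of k f] by (simp add: Iloc_def zero_fun_def)
qed (simp add: Dloc_def zero_fun_def fun_eq_iff)

text \<open>d_k maps into the part with r_k \<noteq> 0, which meets E_(k-1) only in 0.\<close>
lemma Dloc_in_Emod_pred_eq_0:
  assumes "Dloc k f \<in> Emod (k - 1)" "1 \<le> k"
  shows "Dloc k (f :: _ \<Rightarrow> 'a::comm_ring_1) = 0"
proof
  fix a
  have "Dloc k f a \<noteq> 0 \<Longrightarrow> a k = 0" using assms(1) unfolding Emod_pred_iff[OF assms(2)] by blast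
  then show "Dloc k f a = 0 a" by (cases "a k = 0") (auto simp: Dloc_def)
qed

lemma Dpol_eq_0_imp_Emod_pred:
  assumes e: "e \<in> Emod n" and n: "1 \<le> n" and De: "Dpol n (e :: _ \<Rightarrow> 'a::field_char_0) = 0"
  shows "e \<in> Emod (n - 1)"
proof -
  have "a n = 0" if "e a \<noteq> 0" for a
  proof (rule ccontr)
    assume "a n \<noteq> 0"
    then obtain m where m: "a n = Suc m" by (cases "a n") auto
    then have "a(n := Suc m) = a" by auto
    then have "Dpol n e (a(n := m)) = of_nat (Suc m) * e a" by (simp add: Dpol_def del: of_nat_Suc)
    then show False using De that by (simp del: of_nat_Suc)
  qed
  then show ?thesis using e unfolding Emod_pred_iff[OF n] by blast
qed

lemma Dloc_zero [simp]: "Dloc k (0 :: _ \<Rightarrow> 'a::comm_ring_1) = 0"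
  by (simp add: Dloc_def fun_eq_iff)

lemma Dloc_add: "Dloc k (f + g :: _ \<Rightarrow> 'a::comm_ring_1) = Dloc k f + Dloc k g"
  by (auto simp: Dloc_def fun_eq_iff algebra_simps)

lemma Dloc_uminus: "Dloc k (- f :: _ \<Rightarrow> 'a::comm_ring_1) = - Dloc k f"
  by (auto simp: Dloc_def fun_eq_iff)

lemma Dloc_diff: "Dloc k (f - g :: _ \<Rightarrow> 'a::comm_ring_1) = Dloc k f - Dloc k g"
  by (auto simp: Dloc_def fun_eq_iff algebra_simps)

lemma Dpol_add: "Dpol k (f + g :: _ \<Rightarrow> 'a::comm_ring_1) = Dpol k f + Dpol k g"
  by (auto simp: Dpol_def fun_eq_iff algebra_simps)

lemma Dpol_uminus: "Dpol k (- f :: _ \<Rightarrow> 'a::comm_ring_1) = - Dpol k f"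
  by (auto simp: Dpol_def fun_eq_iff)

lemma DN_zero [simp]: "DN n k (0 :: _ \<Rightarrow> 'a::comm_ring_1) = 0"
  by (auto simp: DN_def Dpol_def fun_eq_iff)

lemma DN_add: "DN n k (f + g :: _ \<Rightarrow> 'a::comm_ring_1) = DN n k f + DN n k g"
  by (simp add: DN_def Dloc_add Dpol_add)

lemma DN_uminus: "DN n k (- f :: _ \<Rightarrow> 'a::comm_ring_1) = - DN n k f"
  by (simp add: DN_def Dloc_uminus Dpol_uminus)

lemma Dloc_Dloc_commute: "j \<noteq> k \<Longrightarrow> Dloc j (Dloc k (f :: _ \<Rightarrow> 'a::comm_ring_1)) = Dloc k (Dloc j f)"
  by (auto simp: Dloc_def fun_eq_iff fun_upd_twist algebra_simps)

lemma Dloc_Dpol_commute: "j \<noteq> k \<Longrightarrow> Dloc j (Dpol k (f :: _ \<Rightarrow> 'a::comm_ring_1)) = Dpol k (Dloc j f)"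
  by (auto simp: Dloc_def Dpol_def fun_eq_iff fun_upd_twist algebra_simps)

lemma Dloc_DN_commute: "j \<noteq> k \<Longrightarrow> Dloc j (DN n k (f :: _ \<Rightarrow> 'a::comm_ring_1)) = DN n k (Dloc j f)"
  by (simp add: DN_def Dloc_Dloc_commute Dloc_Dpol_commute)

type_synonym 'a chain = "nat set \<Rightarrow> (nat \<Rightarrow> nat) \<Rightarrow> 'a"

lemma KC_iff:
  "z \<in> KC n c i \<longleftrightarrow> (\<forall>S. z S \<in> Emod n) \<and> (\<forall>S. z S \<noteq> 0 \<longrightarrow> S \<subseteq> {c..n} \<and> card S = i)"
  by (simp add: KC_def zero_fun_def)

lemma KC_zero [simp]: "(0 :: 'a::zero chain) \<in> KC n c i"
  by (simp add: KC_iff Emod_def)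

lemma KC_add: "(z :: 'a::monoid_add chain) \<in> KC n c i \<Longrightarrow> w \<in> KC n c i \<Longrightarrow> z + w \<in> KC n c i"
  unfolding KC_iff by (metis Emod_add add.right_neutral plus_fun_apply)

lemma KC_uminus: "(z :: 'a::ab_group_add chain) \<in> KC n c i \<Longrightarrow> - z \<in> KC n c i"
  unfolding KC_iff by (auto intro: Emod_uminus)

lemma KC_diff: "(z :: 'a::ab_group_add chain) \<in> KC n c i \<Longrightarrow> w \<in> KC n c i \<Longrightarrow> z - w \<in> KC n c i"
  using KC_add[of z n c i "- w"] KC_uminus[of w n c i] by simp

lemma KC_subset_atLeastAtMost: "y \<in> KC n c i \<Longrightarrow> y S \<noteq> 0 \<Longrightarrow> S \<subseteq> {c..n}"
  by (simp add: KC_iff)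

lemma Kcycles_iff: "z \<in> Kcycles n c i \<longleftrightarrow> z \<in> KC n c i \<and> kd n c z = 0"
  by (simp add: Kcycles_def zero_fun_def)

lemma Kbound_iff: "x \<in> Kbound n c i \<longleftrightarrow> (\<exists>y\<in>KC n c (Suc i). x = kd n c y)"
  by (auto simp: Kbound_def)

lemma Kbound_1_iff: "x \<in> Kbound n c 1 \<longleftrightarrow> (\<exists>y\<in>KC n c 2. x = kd n c y)"
  by (simp add: Kbound_iff numeral_2_eq_2)

lemma kd_add: "kd n c (z + w) = kd n c z + kd n c w"
  by (simp add: kd_def fun_eq_iff DN_add distrib_left sum.distrib)

lemma kd_uminus: "kd n c (- z) = - kd n c z"
  by (simp add: kd_def fun_eq_iff DN_uminus sum_negf)

lemma kd_diff: "kd n c (z - w) = kd n c z - kd n c w"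
  using kd_add[of n c z "- w"] kd_uminus[of n c w] by simp

lemma kd_zero [simp]: "kd n c 0 = 0"
  by (simp add: kd_def fun_eq_iff)

lemma Kbound_zero [simp]: "0 \<in> Kbound n c i"
  unfolding Kbound_def by (rule image_eqI[of _ _ 0]) auto

lemma Kbound_diff: "x \<in> Kbound n c i \<Longrightarrow> y \<in> Kbound n c i \<Longrightarrow> x - y \<in> Kbound n c i"
  unfolding Kbound_def by (auto simp: kd_diff[symmetric] intro!: KC_diff)

definition Dchain :: "nat \<Rightarrow> 'a::comm_ring_1 chain \<Rightarrow> 'a chain" where
  "Dchain k z = (\<lambda>S. Dloc k (z S))"

lemma Dchain_uminus: "Dchain k (- z) = - Dchain k z"
  by (simp add: Dchain_def fun_eq_iff Dloc_uminus)

lemma Dchain_diff: "Dchain k (z - w) = Dchain k z - Dchain k w"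
  by (simp add: Dchain_def fun_eq_iff Dloc_diff)

lemma KC_Dchain:
  assumes "z \<in> KC n c i" "1 \<le> k" "k \<le> n"
  shows "Dchain k z \<in> KC n c i"
proof -
  have "Dchain k z S \<noteq> 0 \<Longrightarrow> z S \<noteq> 0" for S by (auto simp: Dchain_def)
  then show ?thesis using assms by (auto simp: KC_iff Dchain_def intro: Emod_Dloc)
qed

lemma kd_Dchain:
  assumes "c < m"
  shows "kd n m (Dchain c z) = Dchain c (kd n m z)"
proof (intro ext)
  fix T a
  show "kd n m (Dchain c z) T a = Dchain c (kd n m z) T a"
  proof (cases "T \<subseteq> {m..n}")
    case True
    have "kd n m (Dchain c z) T a
        = (\<Sum>s\<in>{m..n} - T. (-1) ^ card {t\<in>T. t < s} * Dloc c (DN n s (z (insert s T))) a)"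
      using True assms by (simp add: kd_def Dchain_def Dloc_DN_commute)
    also have "\<dots> = Dloc c (\<lambda>a. \<Sum>s\<in>{m..n} - T. (-1) ^ card {t\<in>T. t < s} * DN n s (z (insert s T)) a) a"
      by (simp add: Dloc_def sum_distrib_left algebra_simps)
    finally show ?thesis using True by (simp add: Dchain_def kd_def)
  qed (simp add: kd_def Dchain_def Dloc_def)
qed

section \<open>The Koszul complex as a mapping cone\<close>

text \<open>A chain of K(d_c, ..., d_n) is a pair of chains of K(d_(c+1), ..., d_n): its components on
  the index sets without c, and those on the index sets containing c (with c removed).\<close>
definition cone :: "nat \<Rightarrow> 'a::zero chain \<Rightarrow> 'a chain \<Rightarrow> 'a chain" where
  "cone c y0 y1 = (\<lambda>S. if c \<in> S then y1 (S - {c}) else y0 S)"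

definition cone_fst :: "nat \<Rightarrow> 'a::zero chain \<Rightarrow> 'a chain" where
  "cone_fst c z = (\<lambda>S. if c \<in> S then 0 else z S)"

definition cone_snd :: "nat \<Rightarrow> 'a::zero chain \<Rightarrow> 'a chain" where
  "cone_snd c z = (\<lambda>T. if c \<in> T then 0 else z (insert c T))"

definition avoids :: "nat \<Rightarrow> 'a::zero chain \<Rightarrow> bool" where
  "avoids c x \<longleftrightarrow> (\<forall>S. c \<in> S \<longrightarrow> x S = 0)"

lemma cone_fst_snd: "cone c (cone_fst c z) (cone_snd c z) = z"
  by (auto simp: cone_def cone_fst_def cone_snd_def fun_eq_iff insert_absorb)

lemma cone_diff: "cone c (x - x') (y - y') = cone c x y - cone c x' y'"
  by (auto simp: cone_def fun_eq_iff)

lemma cone_zero [simp]: "cone c 0 0 = 0"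
  by (auto simp: cone_def fun_eq_iff)

lemma cone_inject:
  assumes "avoids c x" "avoids c y" "avoids c x'" "avoids c y'" "cone c x y = cone c x' y'"
  shows "x = x' \<and> y = y'"
proof
  show "x = x'"
  proof
    fix S
    have "cone c x y S = cone c x' y' S" by (simp add: assms(5))
    then show "x S = x' S" using assms(1-4) by (cases "c \<in> S") (auto simp: avoids_def cone_def)
  qed
  show "y = y'"
  proof
    fix S
    have "cone c x y (insert c S) = cone c x' y' (insert c S)" by (simp add: assms(5))
    then show "y S = y' S" using assms(1-4) by (cases "c \<in> S") (auto simp: avoids_def cone_def)
  qed
qed

lemma avoids_KC: "z \<in> KC n (Suc c) i \<Longrightarrow> avoids c z"
  unfolding KC_iff avoids_def by force

lemma avoids_kd: "avoids c (kd n (Suc c) z)"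
  unfolding avoids_def kd_def by (auto simp: fun_eq_iff)

lemma avoids_add: "avoids c (x :: 'a::monoid_add chain) \<Longrightarrow> avoids c y \<Longrightarrow> avoids c (x + y)"
  unfolding avoids_def by auto

lemma avoids_uminus: "avoids c (x :: 'a::ab_group_add chain) \<Longrightarrow> avoids c (- x)"
  unfolding avoids_def by auto

lemma avoids_Dchain: "avoids c x \<Longrightarrow> avoids c (Dchain k x)"
  unfolding avoids_def Dchain_def by (auto simp: Dloc_def)

lemma subset_atLeastAtMost_Suc: "S \<subseteq> {c..n} \<Longrightarrow> c \<notin> S \<Longrightarrow> S \<subseteq> {Suc c..n}"
  by (metis atLeastAtMost_iff atLeastSucAtMost_greaterThanAtMost greaterThanAtMost_iff
      le_neq_implies_less subset_iff)

lemma cone_fst_KC: "z \<in> KC n c i \<Longrightarrow> cone_fst c z \<in> KC n (Suc c) i"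
  by (auto simp: KC_iff cone_fst_def Emod_def subset_atLeastAtMost_Suc split: if_splits)

lemma cone_snd_KC:
  assumes z: "z \<in> KC n c i" shows "cone_snd c z \<in> KC n (Suc c) (i - 1)"
  unfolding KC_iff
proof (intro conjI; intro allI impI)
  fix S show "cone_snd c z S \<in> Emod n" using z by (auto simp: KC_iff cone_snd_def Emod_def)
next
  fix S assume "cone_snd c z S \<noteq> 0"
  then have cS: "c \<notin> S" and "z (insert c S) \<noteq> 0" by (auto simp: cone_snd_def split: if_splits)
  with z have sub: "insert c S \<subseteq> {c..n}" and card: "card (insert c S) = i"
    by (auto simp: KC_iff)
  have "finite (insert c S)" using sub by (rule finite_subset) simp
  then have "card S = i - 1" using card cS by simp
  then show "S \<subseteq> {Suc c..n} \<and> card S = i - 1"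
    using sub cS subset_atLeastAtMost_Suc[of S c n] by auto
qed

lemma cone_snd_KC_0:
  assumes z: "z \<in> KC n c 0"
  shows "cone_snd c z = 0"
proof
  fix S
  have "z (insert c S) = 0"
  proof (rule ccontr)
    assume "z (insert c S) \<noteq> 0"
    then have "insert c S \<subseteq> {c..n}" "card (insert c S) = 0" using z by (auto simp: KC_iff)
    moreover have "finite (insert c S)" using calculation(1) by (rule finite_subset) simp
    ultimately show False by simp
  qed
  then show "cone_snd c z S = 0 S" by (simp add: cone_snd_def)
qed

lemma cone_KC:
  assumes cn: "c < n" and y0: "y0 \<in> KC n (Suc c) (Suc j)" and y1: "y1 \<in> KC n (Suc c) j"
  shows "cone c y0 y1 \<in> KC n c (Suc j)"
  unfolding KC_iff
proof (intro conjI; intro allI impI)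
  fix S show "cone c y0 y1 S \<in> Emod n" using y0 y1 by (auto simp: KC_iff cone_def)
next
  fix S assume nz: "cone c y0 y1 S \<noteq> 0"
  show "S \<subseteq> {c..n} \<and> card S = Suc j"
  proof (cases "c \<in> S")
    case True
    then have "y1 (S - {c}) \<noteq> 0" using nz by (simp add: cone_def)
    then have sub: "S - {c} \<subseteq> {Suc c..n}" and card: "card (S - {c}) = j"
      using y1 by (auto simp: KC_iff)
    have "finite (S - {c})" using sub by (rule finite_subset) simp
    then have "card S = Suc j" using card_Suc_Diff1[of S c] card True by simp
    then show ?thesis using sub True cn by auto
  next
    case False
    then have "y0 S \<noteq> 0" using nz by (simp add: cone_def)
    then have "S \<subseteq> {Suc c..n} \<and> card S = Suc j" using y0 by (simp add: KC_iff)
    then show ?thesis by auto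
  qed
qed

lemma kd_cone_insert:
  fixes y0 y1 :: "'a::comm_ring_1 chain"
  assumes cn: "c < n" and T: "T \<subseteq> {Suc c..n}"
  shows "kd n c (cone c y0 y1) (insert c T) a = - kd n (Suc c) y1 T a"
proof -
  have cT: "c \<notin> T" using T by auto
  have summand: "(-1) ^ card {t\<in>insert c T. t < s} * DN n s (cone c y0 y1 (insert s (insert c T))) a
      = - ((-1) ^ card {t\<in>T. t < s} * DN n s (y1 (insert s T)) a)"
    if s: "s \<in> {Suc c..n} - T" for s
  proof -
    have "{t\<in>insert c T. t < s} = insert c {t\<in>T. t < s}" using s by auto
    moreover have "finite {t\<in>T. t < s}" by (rule finite_subset[of _ "{..<s}"]) auto
    moreover have "insert s (insert c T) - {c} = insert s T" using s cT by auto
    ultimately show ?thesis using cT by (simp add: cone_def)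
  qed
  have "insert c T \<subseteq> {c..n}" using cn T by auto
  then have "kd n c (cone c y0 y1) (insert c T) a = (\<Sum>s\<in>{c..n} - insert c T.
      (-1) ^ card {t\<in>insert c T. t < s} * DN n s (cone c y0 y1 (insert s (insert c T))) a)"
    by (simp only: kd_def if_True)
  also have "{c..n} - insert c T = {Suc c..n} - T" by auto
  also have "(\<Sum>s\<in>{Suc c..n} - T.
      (-1) ^ card {t\<in>insert c T. t < s} * DN n s (cone c y0 y1 (insert s (insert c T))) a)
      = (\<Sum>s\<in>{Suc c..n} - T. - ((-1) ^ card {t\<in>T. t < s} * DN n s (y1 (insert s T)) a))"
    by (rule sum.cong[OF refl]) (rule summand)
  also have "\<dots> = - kd n (Suc c) y1 T a" using T by (simp add: kd_def sum_negf)
  finally show ?thesis .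
qed

text \<open>The d_c-term has sign +1 because c is the smallest index.\<close>
lemma kd_cone_notin:
  fixes y0 y1 :: "'a::comm_ring_1 chain"
  assumes cn: "c < n" and T: "T \<subseteq> {Suc c..n}"
  shows "kd n c (cone c y0 y1) T a = Dloc c (y1 T) a + kd n (Suc c) y0 T a"
proof -
  define F where "F s = (-1) ^ card {t\<in>T. t < s} * DN n s (cone c y0 y1 (insert s T)) a" for s
  have cT: "c \<notin> T" using T by auto
  have none_below: "{t\<in>T. t < c} = {}" using T by auto
  have Fc: "F c = Dloc c (y1 T) a"
    unfolding F_def none_below using cT cn by (simp add: cone_def DN_def)
  have "cone c y0 y1 (insert s T) = y0 (insert s T)" if "s \<in> {Suc c..n} - T" for s
    using that cT by (simp add: cone_def)
  then have "(\<Sum>s\<in>{Suc c..n} - T. F s)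
      = (\<Sum>s\<in>{Suc c..n} - T. (-1) ^ card {t\<in>T. t < s} * DN n s (y0 (insert s T)) a)"
    unfolding F_def by (intro sum.cong) auto
  then have Frest: "(\<Sum>s\<in>{Suc c..n} - T. F s) = kd n (Suc c) y0 T a"
    using T by (simp add: kd_def)
  have "T \<subseteq> {c..n}" using T by auto
  then have "kd n c (cone c y0 y1) T a = (\<Sum>s\<in>{c..n} - T. F s)"
    by (simp add: kd_def F_def)
  also have "{c..n} - T = insert c ({Suc c..n} - T)" using cT T cn by auto
  also have "(\<Sum>s\<in>insert c ({Suc c..n} - T). F s) = F c + (\<Sum>s\<in>{Suc c..n} - T. F s)"
    by (rule sum.insert) auto
  finally show ?thesis using Fc Frest by simp
qed

lemma kd_cone:
  fixes y0 y1 :: "'a::comm_ring_1 chain"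
  assumes cn: "c < n" and y1: "y1 \<in> KC n (Suc c) j"
  shows "kd n c (cone c y0 y1) = cone c (kd n (Suc c) y0 + Dchain c y1) (- kd n (Suc c) y1)"
proof (intro ext)
  fix T a
  show "kd n c (cone c y0 y1) T a = cone c (kd n (Suc c) y0 + Dchain c y1) (- kd n (Suc c) y1) T a"
  proof (cases "T \<subseteq> {c..n}")
    case True
    show ?thesis
    proof (cases "c \<in> T")
      case cT: True
      then have "T = insert c (T - {c})" "T - {c} \<subseteq> {Suc c..n}"
        using True subset_atLeastAtMost_Suc[of "T - {c}" c n] by auto
      then show ?thesis using kd_cone_insert[OF cn, of "T - {c}" y0 y1 a] cT by (simp add: cone_def)
    next
      case False
      then show ?thesis using kd_cone_notin[OF cn, of T y0 y1 a] True
        by (simp add: cone_def Dchain_def subset_atLeastAtMost_Suc)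
    qed
  next
    case False
    have "\<not> T - {c} \<subseteq> {Suc c..n}" "\<not> T \<subseteq> {Suc c..n}" using False cn by auto
    moreover have "y1 T = 0" using calculation(2) KC_subset_atLeastAtMost[OF y1] by blast
    ultimately show ?thesis using False by (simp add: cone_def kd_def Dchain_def)
  qed
qed

lemma cone_Kbound:
  assumes "c < n" "u \<in> KC n (Suc c) (Suc i)" "v \<in> KC n (Suc c) i"
  shows "cone c (kd n (Suc c) u + Dchain c v) (- kd n (Suc c) v) \<in> Kbound n c i"
  unfolding Kbound_iff using kd_cone[OF assms(1,3), of u, symmetric] cone_KC[OF assms] by blast

lemma kd_cone_components:
  fixes y :: "'a::comm_ring_1 chain"
  assumes cn: "c < n" and y: "y \<in> KC n c i" and x: "avoids c x" and dy: "kd n c y = cone c x 0"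
  shows "kd n (Suc c) (cone_fst c y) + Dchain c (cone_snd c y) = x"
    and "kd n (Suc c) (cone_snd c y) = 0"
proof -
  have y1: "cone_snd c y \<in> KC n (Suc c) (i - 1)" by (rule cone_snd_KC[OF y])
  have "cone c (kd n (Suc c) (cone_fst c y) + Dchain c (cone_snd c y)) (- kd n (Suc c) (cone_snd c y))
      = cone c x 0"
    using kd_cone[OF cn y1, of "cone_fst c y"] cone_fst_snd[of c y] dy
    by simp
  moreover have "avoids c (kd n (Suc c) (cone_fst c y) + Dchain c (cone_snd c y))"
    by (intro avoids_add avoids_kd avoids_Dchain avoids_KC[OF y1])
  moreover have "avoids c (- kd n (Suc c) (cone_snd c y))" by (intro avoids_uminus avoids_kd)
  moreover have "avoids c (0 :: 'a chain)" by (simp add: avoids_def)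
  ultimately have "kd n (Suc c) (cone_fst c y) + Dchain c (cone_snd c y) = x
      \<and> - kd n (Suc c) (cone_snd c y) = 0"
    using x cone_inject by blast
  then show "kd n (Suc c) (cone_fst c y) + Dchain c (cone_snd c y) = x"
    and "kd n (Suc c) (cone_snd c y) = 0" by auto
qed

section \<open>The representing cycles\<close>

text \<open>The chain e \<otimes> e_{n}; it is the map \<phi> in H1_iso.\<close>
definition phi :: "nat \<Rightarrow> ((nat \<Rightarrow> nat) \<Rightarrow> 'a::zero) \<Rightarrow> 'a chain" where
  "phi n e = (\<lambda>S. if S = {n} then e else 0)"

lemma phi_add: "phi n (e + e') = phi n e + (phi n e' :: 'a::monoid_add chain)"
  by (auto simp: phi_def fun_eq_iff)

lemma phi_diff: "phi n (e - e') = phi n e - (phi n e' :: 'a::ab_group_add chain)"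
  by (auto simp: phi_def fun_eq_iff)

lemma phi_zero [simp]: "phi n 0 = 0"
  by (simp add: phi_def fun_eq_iff)

lemma phi_eq_0_iff [simp]: "phi n e = 0 \<longleftrightarrow> e = 0"
  by (auto simp: phi_def fun_eq_iff)

lemma Dchain_phi: "Dchain c (phi n e) = phi n (Dloc c e)"
  by (auto simp: phi_def Dchain_def fun_eq_iff Dloc_def)

lemma avoids_phi: "c \<noteq> n \<Longrightarrow> avoids c (phi n e)"
  by (auto simp: avoids_def phi_def)

lemma cone_phi: "c \<noteq> n \<Longrightarrow> cone c (phi n e) 0 = phi n e"
  by (auto simp: cone_def phi_def fun_eq_iff)

lemma phi_KC: "e \<in> Emod n \<Longrightarrow> c \<le> n \<Longrightarrow> phi n e \<in> KC n c 1"
  by (auto simp: KC_iff phi_def Emod_def)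

text \<open>For m < n, E_m has no X_n-part, so d/dX_n kills it.\<close>
lemma kd_phi:
  assumes e: "e \<in> Emod m" and mn: "m < n"
  shows "kd n c (phi n (e :: _ \<Rightarrow> 'a::comm_ring_1)) = 0"
proof -
  have "e (a(n := Suc (a n))) = 0" for a
  proof (rule ccontr)
    assume "e (a(n := Suc (a n))) \<noteq> 0"
    then have "valid_idx m (a(n := Suc (a n)))" using e by (simp add: Emod_def)
    then show False using mn unfolding valid_idx_def by (metis fun_upd_same nat.distinct(1))
  qed
  then have "DN n s (phi n e (insert s T)) = 0" for s T
    by (auto simp: phi_def DN_def Dpol_def fun_eq_iff)
  then show ?thesis by (simp add: kd_def fun_eq_iff)
qed

lemma phi_Kcycles:
  assumes e: "e \<in> Emod (c - 1)" and c: "1 \<le> c" "c \<le> n"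
  shows "phi n e \<in> Kcycles n c 1"
proof -
  have "e \<in> Emod n" using e c by (auto intro: Emod_mono)
  then have "phi n e \<in> KC n c 1" using c(2) by (rule phi_KC)
  moreover have "kd n c (phi n e) = 0" using kd_phi[OF e] c by simp
  ultimately show ?thesis unfolding Kcycles_iff by blast
qed

section \<open>Homology of the Koszul complex\<close>

definition H1_phi_surj :: "nat \<Rightarrow> nat \<Rightarrow> 'a::comm_ring_1 itself \<Rightarrow> bool" where
  "H1_phi_surj n c _ \<longleftrightarrow>
     (\<forall>z \<in> (Kcycles n c 1 :: 'a chain set). \<exists>e\<in>Emod (c - 1). z - phi n e \<in> Kbound n c 1)"

definition H1_phi_inj :: "nat \<Rightarrow> nat \<Rightarrow> 'a::comm_ring_1 itself \<Rightarrow> bool" where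
  "H1_phi_inj n c _ \<longleftrightarrow>
     (\<forall>e \<in> (Emod (c - 1) :: ((nat \<Rightarrow> nat) \<Rightarrow> 'a) set). phi n e \<in> Kbound n c 1 \<longrightarrow> e = 0)"

lemma KC_top_support: "z \<in> KC n n i \<Longrightarrow> z S \<noteq> 0 \<Longrightarrow> S = {} \<and> i = 0 \<or> S = {n} \<and> i = 1"
  by (auto simp: KC_iff subset_singleton_iff)

lemma KC_top_eq_0: "z \<in> KC n n i \<Longrightarrow> 2 \<le> i \<Longrightarrow> z = 0"
  using KC_top_support by fastforce

lemma kd_top_empty: "kd n n z {} = DN n n (z {n})"
  by (rule ext) (simp add: kd_def)

lemma Kacyclic_top:
  assumes "1 \<le> n" "i \<noteq> 1"
  shows "Kacyclic_at n n i TYPE('a::field_char_0)"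
  unfolding Kacyclic_at_def
proof
  fix z :: "'a chain" assume z: "z \<in> Kcycles n n i"
  show "z \<in> Kbound n n i"
  proof (cases "i = 0")
    case True
    then have zK: "z \<in> KC n n 0" using z by (simp add: Kcycles_iff)
    define w where "w = phi n (Ipol n (z {}))"
    have "w \<in> KC n n 1" unfolding w_def using zK assms(1) by (intro phi_KC Emod_Ipol) (auto simp: KC_iff)
    moreover have "kd n n w T = z T" for T
    proof (cases "T = {}")
      case True
      then show ?thesis by (simp add: kd_top_empty w_def phi_def DN_def Dpol_Ipol)
    next
      case False
      then have "z T = 0" using KC_top_support[OF zK, of T] by auto
      moreover have "T \<subseteq> {n..n} \<Longrightarrow> T = {n}" using False by (auto simp: subset_singleton_iff)
      ultimately show ?thesis by (auto simp: kd_def fun_eq_iff)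
    qed
    then have "kd n n w = z" by blast
    ultimately show ?thesis unfolding Kbound_iff using True by auto
  next
    case False
    then have "2 \<le> i" using assms(2) by simp
    then have "z = 0" using z KC_top_eq_0[of z n i] by (simp add: Kcycles_iff)
    then show ?thesis by simp
  qed
qed

lemma H1_phi_surj_top:
  assumes "1 \<le> n" shows "H1_phi_surj n n TYPE('a::field_char_0)"
  unfolding H1_phi_surj_def
proof
  fix z :: "'a chain" assume "z \<in> Kcycles n n 1"
  then have zK: "z \<in> KC n n 1" and zc: "kd n n z = 0" by (auto simp: Kcycles_iff)
  have "z {n} \<in> Emod (n - 1)"
    using zK zc kd_top_empty[of n z] assms
    by (intro Dpol_eq_0_imp_Emod_pred) (auto simp: KC_iff DN_def)
  moreover have "z = phi n (z {n})"
    using KC_top_support[OF zK] by (auto simp: phi_def fun_eq_iff)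
  ultimately show "\<exists>e\<in>Emod (n - 1). z - phi n e \<in> Kbound n n 1" by force
qed

lemma H1_phi_inj_top: "H1_phi_inj n n TYPE('a::field_char_0)"
  unfolding H1_phi_inj_def Kbound_iff using KC_top_eq_0 by force

context
  fixes n c :: nat
  assumes c1: "1 \<le> c" and cn: "c < n"
    and acyclic: "\<And>i. i \<noteq> 1 \<Longrightarrow> Kacyclic_at n (Suc c) i TYPE('a::field_char_0)"
    and surj: "H1_phi_surj n (Suc c) TYPE('a)"
    and inj: "H1_phi_inj n (Suc c) TYPE('a)"
begin

lemma Dchain_boundary_imp_boundary:
  assumes z: "(z :: 'a chain) \<in> Kcycles n (Suc c) j" and Dz: "Dchain c z \<in> Kbound n (Suc c) j"
  shows "z \<in> Kbound n (Suc c) j"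
proof (cases "j = 1")
  case False
  then show ?thesis using acyclic z unfolding Kacyclic_at_def by blast
next
  case True
  obtain e where e: "e \<in> Emod c" and "z - phi n e \<in> Kbound n (Suc c) 1"
    using surj z True unfolding H1_phi_surj_def diff_Suc_1 by auto
  then obtain w where w: "w \<in> KC n (Suc c) 2" and ew: "z - phi n e = kd n (Suc c) w"
    unfolding Kbound_1_iff by blast
  obtain u where u: "u \<in> KC n (Suc c) 2" and Dzu: "Dchain c z = kd n (Suc c) u"
    using Dz unfolding True Kbound_1_iff by blast
  have "phi n (Dloc c e) = Dchain c z - Dchain c (z - phi n e)"
    by (simp add: Dchain_diff Dchain_phi)
  also have "\<dots> = kd n (Suc c) (u - Dchain c w)"
    by (simp add: Dzu ew kd_diff kd_Dchain)
  finally have "phi n (Dloc c e) = kd n (Suc c) (u - Dchain c w)" .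
  moreover have "u - Dchain c w \<in> KC n (Suc c) 2" using u w c1 cn by (intro KC_diff KC_Dchain) auto
  ultimately have "phi n (Dloc c e) \<in> Kbound n (Suc c) 1" unfolding Kbound_1_iff by blast
  moreover have "Dloc c e \<in> Emod c" using e c1 by (simp add: Emod_Dloc)
  ultimately have "Dloc c e = 0" using inj unfolding H1_phi_inj_def diff_Suc_1 by blast
  then have "e = 0" by (simp add: Dloc_eq_0_iff)
  then show ?thesis using ew w unfolding True Kbound_1_iff by auto
qed

lemma Kcycles_cone_snd_boundary:
  assumes z: "(z :: 'a chain) \<in> Kcycles n c i"
  obtains w where "w \<in> KC n (Suc c) i" "cone_snd c z = kd n (Suc c) w"
    "kd n (Suc c) (cone_fst c z + Dchain c w) = 0"
proof -
  have zK: "z \<in> KC n c i" and "kd n c z = cone c 0 0" using z by (auto simp: Kcycles_iff)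
  note parts = kd_cone_components[OF cn zK _ this(2)]
  have "\<exists>w\<in>KC n (Suc c) i. cone_snd c z = kd n (Suc c) w"
  proof (cases i)
    case 0
    then have "cone_snd c z = 0" using cone_snd_KC_0 zK by blast
    then show ?thesis by (intro bexI[of _ 0]) auto
  next
    case (Suc j)
    have "cone_snd c z \<in> Kcycles n (Suc c) j"
      using cone_snd_KC[OF zK] parts Suc by (simp add: Kcycles_iff avoids_def)
    moreover have "Dchain c (cone_snd c z) = kd n (Suc c) (- cone_fst c z)"
      using parts(1) by (simp add: avoids_def kd_uminus eq_neg_iff_add_eq_0 add.commute)
    then have "Dchain c (cone_snd c z) \<in> Kbound n (Suc c) j"
      using cone_fst_KC[OF zK] Suc by (auto simp: Kbound_iff intro: KC_uminus)
    ultimately show ?thesis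
      using Dchain_boundary_imp_boundary Suc by (simp add: Kbound_iff)
  qed
  then obtain w where w: "w \<in> KC n (Suc c) i" "cone_snd c z = kd n (Suc c) w" by blast
  have "kd n (Suc c) (cone_fst c z + Dchain c w) = 0"
    using parts(1) w(2) by (simp add: avoids_def kd_add kd_Dchain)
  with w show ?thesis by (rule that)
qed

lemma Kacyclic_step: "i \<noteq> 1 \<Longrightarrow> Kacyclic_at n c i TYPE('a)"
  unfolding Kacyclic_at_def
proof
  fix z :: "'a chain" assume i: "i \<noteq> 1" and z: "z \<in> Kcycles n c i"
  then have zK: "z \<in> KC n c i" by (simp add: Kcycles_iff)
  obtain w where w: "w \<in> KC n (Suc c) i" "cone_snd c z = kd n (Suc c) w"
    and dw: "kd n (Suc c) (cone_fst c z + Dchain c w) = 0"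
    using Kcycles_cone_snd_boundary[OF z] by blast
  have "cone_fst c z + Dchain c w \<in> Kcycles n (Suc c) i"
    using cone_fst_KC[OF zK] KC_Dchain[OF w(1) c1] cn dw by (simp add: Kcycles_iff KC_add)
  then have "cone_fst c z + Dchain c w \<in> Kbound n (Suc c) i"
    using acyclic[OF i] unfolding Kacyclic_at_def by blast
  then obtain u where u: "u \<in> KC n (Suc c) (Suc i)" "cone_fst c z + Dchain c w = kd n (Suc c) u"
    unfolding Kbound_iff by blast
  have "kd n (Suc c) u + Dchain c (- w) = cone_fst c z" "- kd n (Suc c) (- w) = cone_snd c z"
    using u(2)[symmetric] w(2) by (simp_all add: Dchain_uminus kd_uminus)
  then show "z \<in> Kbound n c i"
    using cone_Kbound[OF cn u(1) KC_uminus[OF w(1)]] by (simp add: cone_fst_snd)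
qed

text \<open>Split the class e from E_c as Pzero c e + d_c (Iloc c e); the second summand is a boundary
  in the cone, so only the E_(c-1)-part survives.\<close>
lemma H1_phi_surj_step: "H1_phi_surj n c TYPE('a)"
  unfolding H1_phi_surj_def
proof
  fix z :: "'a chain" assume z: "z \<in> Kcycles n c 1"
  then have zK: "z \<in> KC n c 1" by (simp add: Kcycles_iff)
  obtain w where w: "w \<in> KC n (Suc c) 1" "cone_snd c z = kd n (Suc c) w"
    and dw: "kd n (Suc c) (cone_fst c z + Dchain c w) = 0"
    using Kcycles_cone_snd_boundary[OF z] by blast
  have "cone_fst c z + Dchain c w \<in> Kcycles n (Suc c) 1"
    using cone_fst_KC[OF zK] KC_Dchain[OF w(1) c1] cn dw by (simp add: Kcycles_iff KC_add)
  then obtain e where e: "e \<in> Emod c" and "cone_fst c z + Dchain c w - phi n e \<in> Kbound n (Suc c) 1"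
    using surj unfolding H1_phi_surj_def diff_Suc_1 by auto
  then obtain u where u: "u \<in> KC n (Suc c) 2"
    and eu: "cone_fst c z + Dchain c w - phi n e = kd n (Suc c) u"
    unfolding Kbound_1_iff by blast
  define g where "g = Iloc c e"
  have e0: "Pzero c e \<in> Emod (c - 1)" by (rule Emod_Pzero[OF e c1])
  have g: "g \<in> Emod c" unfolding g_def by (rule Emod_Iloc[OF e])
  have e_split: "phi n e = phi n (Pzero c e) + phi n (Dloc c g)"
    unfolding g_def by (simp add: phi_add[symmetric] Pzero_add_Dloc_Iloc)
  define v where "v = phi n g - w"
  have v: "v \<in> KC n (Suc c) 1"
    unfolding v_def using w(1) g cn by (intro KC_diff phi_KC Emod_mono[OF g]) auto
  have "kd n (Suc c) u + Dchain c v
      = (cone_fst c z + Dchain c w - phi n e) + (phi n (Dloc c g) - Dchain c w)"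
    using eu by (simp add: v_def Dchain_diff Dchain_phi)
  also have "\<dots> = cone_fst c z - phi n (Pzero c e)"
    using e_split by (simp add: algebra_simps)
  finally have fst_eq: "kd n (Suc c) u + Dchain c v = cone_fst c z - phi n (Pzero c e)" .
  have snd_eq: "- kd n (Suc c) v = cone_snd c z"
    using w(2) kd_phi[OF g cn] by (simp add: v_def kd_diff)
  have "cone c (kd n (Suc c) u + Dchain c v) (- kd n (Suc c) v) \<in> Kbound n c 1"
    using cone_Kbound[OF cn _ v] u by (simp add: numeral_2_eq_2)
  also have "cone c (kd n (Suc c) u + Dchain c v) (- kd n (Suc c) v)
      = cone c (cone_fst c z) (cone_snd c z) - cone c (phi n (Pzero c e)) 0"
    using cone_diff[of c "cone_fst c z" "phi n (Pzero c e)" "cone_snd c z" 0] fst_eq snd_eq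
    by simp
  also have "\<dots> = z - phi n (Pzero c e)"
    using cn by (simp add: cone_fst_snd cone_phi)
  finally show "\<exists>e\<in>Emod (c - 1). z - phi n e \<in> Kbound n c 1" using e0 by blast
qed

lemma H1_phi_inj_step: "H1_phi_inj n c TYPE('a)"
  unfolding H1_phi_inj_def
proof (intro ballI impI)
  fix e :: "(nat \<Rightarrow> nat) \<Rightarrow> 'a" assume e: "e \<in> Emod (c - 1)" and "phi n e \<in> Kbound n c 1"
  then obtain y where y: "y \<in> KC n c 2" and "phi n e = kd n c y"
    unfolding Kbound_1_iff by blast
  then have py: "kd n c y = cone c (phi n e) 0" using cn cone_phi[of c n e] by simp
  have "avoids c (phi n e)" using cn by (simp add: avoids_phi)
  note parts = kd_cone_components[OF cn y this py]
  have "cone_snd c y \<in> Kcycles n (Suc c) 1"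
    using cone_snd_KC[OF y] parts(2) by (simp add: Kcycles_iff)
  then obtain g where g: "g \<in> Emod c" and "cone_snd c y - phi n g \<in> Kbound n (Suc c) 1"
    using surj unfolding H1_phi_surj_def diff_Suc_1 by auto
  then obtain w where w: "w \<in> KC n (Suc c) 2" and gw: "cone_snd c y - phi n g = kd n (Suc c) w"
    unfolding Kbound_1_iff by blast
  have "phi n (e - Dloc c g) = kd n (Suc c) (cone_fst c y + Dchain c w)"
    using parts(1) cn gw[symmetric] by (simp add: phi_diff Dchain_phi[symmetric] Dchain_diff kd_add kd_Dchain)
  moreover have "cone_fst c y + Dchain c w \<in> KC n (Suc c) 2"
    using cone_fst_KC[OF y] w c1 cn by (intro KC_add KC_Dchain) auto
  moreover have "e - Dloc c g \<in> Emod c"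
    using e g c1 by (intro Emod_diff Emod_Dloc Emod_mono[OF e]) auto
  ultimately have "e - Dloc c g = 0"
    using inj unfolding H1_phi_inj_def diff_Suc_1 Kbound_1_iff by blast
  then have "e = Dloc c g" by simp
  then show "e = 0" using e c1 Dloc_in_Emod_pred_eq_0 by metis
qed

end

lemma Koszul_homology_E:
  assumes "1 \<le> c" "c \<le> n"
  shows "(\<forall>i. i \<noteq> 1 \<longrightarrow> Kacyclic_at n c i TYPE('a::field_char_0))
    \<and> H1_phi_surj n c TYPE('a) \<and> H1_phi_inj n c TYPE('a)"
  using assms
proof (induction "n - c" arbitrary: c)
  case 0
  then have "c = n" by simp
  then show ?case using 0 Kacyclic_top H1_phi_surj_top H1_phi_inj_top by auto
next
  case (Suc k)
  then have cn: "c < n" by simp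
  with Suc have "(\<forall>i. i \<noteq> 1 \<longrightarrow> Kacyclic_at n (Suc c) i TYPE('a))
      \<and> H1_phi_surj n (Suc c) TYPE('a) \<and> H1_phi_inj n (Suc c) TYPE('a)"
    by simp
  then have "\<And>i. i \<noteq> 1 \<Longrightarrow> Kacyclic_at n (Suc c) i TYPE('a)"
    and "H1_phi_surj n (Suc c) TYPE('a)" and "H1_phi_inj n (Suc c) TYPE('a)"
    by auto
  note step = Suc.prems(1) cn this
  show ?case
    using Kacyclic_step[OF step] H1_phi_surj_step[OF step] H1_phi_inj_step[OF step] by blast
qed

lemma H1_iso_phi:
  assumes c: "1 \<le> c" "c \<le> n"
    and surj: "H1_phi_surj n c TYPE('a::comm_ring_1)" and inj: "H1_phi_inj n c TYPE('a)"
  shows "H1_iso n c (phi n :: ((nat \<Rightarrow> nat) \<Rightarrow> 'a) \<Rightarrow> 'a chain)"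
proof -
  have unique: "\<exists>!e. e \<in> Emod (c - 1) \<and> z - phi n e \<in> Kbound n c 1"
    if z: "z \<in> Kcycles n c 1" for z :: "'a chain"
  proof -
    obtain e where e: "e \<in> Emod (c - 1)" "z - phi n e \<in> Kbound n c 1"
      using surj z unfolding H1_phi_surj_def by blast
    moreover have "e' = e" if "e' \<in> Emod (c - 1)" "z - phi n e' \<in> Kbound n c 1" for e'
    proof -
      have "phi n (e' - e) \<in> Kbound n c 1"
        using Kbound_diff[OF e(2) that(2)] by (simp add: phi_diff)
      moreover have "e' - e \<in> Emod (c - 1)" using that(1) e(1) by (rule Emod_diff)
      ultimately show ?thesis using inj unfolding H1_phi_inj_def by auto
    qed
    ultimately show ?thesis by blast
  qed
  have diff: "(\<lambda>S a. z S a - phi n e S a) = z - phi n e" for z :: "'a chain" and e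
    by (simp add: fun_eq_iff)
  have add: "phi n (\<lambda>a. x a + y a) = (\<lambda>S a. phi n x S a + phi n y S a)" for x y :: "_ \<Rightarrow> 'a"
    by (auto simp: phi_def fun_eq_iff)
  have smult: "phi n (\<lambda>a. s * x a) = (\<lambda>S a. s * phi n x S a)" for s and x :: "_ \<Rightarrow> 'a"
    by (auto simp: phi_def fun_eq_iff)
  have Xloc: "(\<lambda>S a. phi n (Xloc j x) S a - Xloc j (phi n x S) a) = 0" for j and x :: "_ \<Rightarrow> 'a"
    by (simp add: phi_def Xloc_def fun_eq_iff)
  have Dloc: "(\<lambda>S a. phi n (Dloc j x) S a - Dloc j (phi n x S) a) = 0" for j and x :: "_ \<Rightarrow> 'a"
    by (simp add: phi_def Dloc_def fun_eq_iff)
  show ?thesis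
    unfolding H1_iso_def diff add smult Xloc Dloc using phi_Kcycles[OF _ c] unique by auto
qed

theorem lemma4p2:
  fixes n c :: nat
  assumes "1 \<le> c" and "c \<le> n"
  shows "(\<forall>i. i \<noteq> 1 \<longrightarrow> Kacyclic_at n c i TYPE('a::field_char_0))
       \<and> (\<exists>\<phi> :: ((nat \<Rightarrow> nat) \<Rightarrow> 'a) \<Rightarrow> nat set \<Rightarrow> (nat \<Rightarrow> nat) \<Rightarrow> 'a. H1_iso n c \<phi>)"
  using Koszul_homology_E[OF assms] H1_iso_phi[OF assms] by blast

end
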